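(* Let $b$ be an angular kernel on $S^{d-1}$ and $c_K,C_P>0$. Assume that for every smooth $f:S^{d-1}\to(0,\infty)$ with $f(\sigma)=f(-\sigma)$, \[\int_{S^{d-1}}\Gamma^2_{\mathcal B,\Delta}(\log f,\log f)f\,d\sigma\ge c_K\int_{S^{d-1}}\frac{|\nabla f|^2}{f}d\sigma\quad\text{and}\quad C_P\int_{S^{d-1}}|\nabla f|^2d\sigma\ge\iint_{S^{d-1}\times S^{d-1}}(f(\sigma')-f(\sigma))^2b(\sigma'\cdot\sigma)d\sigma'd\sigma.\] Then for every such $f$, \[\int_{S^{d-1}}\Gamma^2_{\mathcal B,\Delta}(\log f,\log f)f\,d\sigma\ge\frac{2c_K}{C_P}\iint_{S^{d-1}\times S^{d-1}}\frac{(f(\sigma')-f(\sigma))^2}{f(\sigma')+f(\sigma)}b(\sigma'\cdot\sigma)d\sigma'd\sigma,\] i.e. $\Lambda_b\ge 2c_K/C_P$.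
   Context: An angular kernel is $b:[-1,1]\to[0,\infty)$ with $\int(1-(e\cdot\sigma)^2)b(e\cdot\sigma)d\sigma<\infty$. $\mathcal Bg(\sigma)=\int_{S^{d-1}}(g(\sigma')-g(\sigma))b(\sigma'\cdot\sigma)d\sigma'$; $\Gamma_\Delta(g,h)=\nabla g\cdot\nabla h$ (spherical gradient); $\Gamma^2_{\mathcal B,\Delta}(g,h)=\frac12(\mathcal B\Gamma_\Delta(g,h)-\Gamma_\Delta(\mathcal Bg,h)-\Gamma_\Delta(g,\mathcal Bh))$. $\Lambda_b$ is the largest constant for which the displayed conclusion holds for all even positive smooth $f$. *)

theory Defs
  imports "HOL-Analysis.Analysis"
begin

text \<open>The unit sphere S^{d-1} in a Euclidean space 'a of dimension d = DIM('a).\<close>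
abbreviation Sph :: "'a::euclidean_space set" where
  "Sph \<equiv> sphere 0 1"

definition hext :: "('a::euclidean_space \<Rightarrow> real) \<Rightarrow> 'a \<Rightarrow> real" where
  "hext g x = g (x /\<^sub>R norm x)"

fun dirderiv :: "'a::euclidean_space list \<Rightarrow> ('a \<Rightarrow> real) \<Rightarrow> 'a \<Rightarrow> real" where
  "dirderiv [] F = F"
| "dirderiv (v # vs) F = (\<lambda>x. frechet_derivative (dirderiv vs F) (at x) v)"

definition smooth_on :: "'a::euclidean_space set \<Rightarrow> ('a \<Rightarrow> real) \<Rightarrow> bool" where
  "smooth_on U F \<longleftrightarrow> (\<forall>vs. set vs \<subseteq> Basis \<longrightarrow>
      dirderiv vs F differentiable_on U \<and> continuous_on U (dirderiv vs F))"

definition smooth_sphere :: "('a::euclidean_space \<Rightarrow> real) \<Rightarrow> bool" where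
  "smooth_sphere g \<longleftrightarrow> smooth_on (- {0}) (hext g)"

definition grad :: "('a::euclidean_space \<Rightarrow> real) \<Rightarrow> 'a \<Rightarrow> 'a" where
  "grad F x = (\<Sum>i\<in>Basis. frechet_derivative F (at x) i *\<^sub>R i)"

text \<open>Spherical gradient: gradient of the degree-0 homogeneous extension
  (equals the tangential projection of the gradient of any smooth extension).\<close>
definition sgrad :: "('a::euclidean_space \<Rightarrow> real) \<Rightarrow> 'a \<Rightarrow> 'a" where
  "sgrad g x = grad (hext g) x"

text \<open>Surface measure integral over S^{d-1}, via the cone construction:
  int_{S} g dsigma = d * int_{B(0,1)} g(x/|x|) dx.\<close>
definition sph_int :: "('a::euclidean_space \<Rightarrow> real) \<Rightarrow> real" where
  "sph_int g = real DIM('a) * (LINT x : ball 0 1 | lborel. g (x /\<^sub>R norm x))"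

definition sph_int_on :: "'a::euclidean_space set \<Rightarrow> ('a \<Rightarrow> real) \<Rightarrow> real" where
  "sph_int_on A g = sph_int (\<lambda>s. indicator A s * g s)"

definition sph_integrable :: "('a::euclidean_space \<Rightarrow> real) \<Rightarrow> bool" where
  "sph_integrable g \<longleftrightarrow> set_integrable lborel (ball 0 1) (\<lambda>x. g (x /\<^sub>R norm x))"

definition angular_kernel :: "(real \<Rightarrow> real) \<Rightarrow> 'a::euclidean_space itself \<Rightarrow> bool" where
  "angular_kernel b _ \<longleftrightarrow> (\<forall>t\<in>{-1..1}. 0 \<le> b t) \<and> b \<in> borel_measurable borel \<and>
     (\<forall>e::'a. e \<in> Sph \<longrightarrow> sph_integrable (\<lambda>s. (1 - (e \<bullet> s)\<^sup>2) * b (e \<bullet> s)))"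

text \<open>Collision-type operator B g(sigma) = int (g(sigma') - g(sigma)) b(sigma'.sigma) dsigma',
  understood as a principal value (limit of truncations away from sigma' = sigma).\<close>
definition Bop :: "(real \<Rightarrow> real) \<Rightarrow> ('a::euclidean_space \<Rightarrow> real) \<Rightarrow> 'a \<Rightarrow> real" where
  "Bop b g s = Lim (at_right 0)
     (\<lambda>\<epsilon>. sph_int_on {s'. s' \<bullet> s \<le> 1 - \<epsilon>} (\<lambda>s'. (g s' - g s) * b (s' \<bullet> s)))"

definition Gamma_Delta :: "('a::euclidean_space \<Rightarrow> real) \<Rightarrow> ('a \<Rightarrow> real) \<Rightarrow> 'a \<Rightarrow> real" where
  "Gamma_Delta g h s = sgrad g s \<bullet> sgrad h s"

definition Gamma2 :: "(real \<Rightarrow> real) \<Rightarrow> ('a::euclidean_space \<Rightarrow> real) \<Rightarrow> ('a \<Rightarrow> real) \<Rightarrow> 'a \<Rightarrow> real" where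
  "Gamma2 b g h s = (1/2) * (Bop b (Gamma_Delta g h) s
      - Gamma_Delta (Bop b g) h s - Gamma_Delta g (Bop b h) s)"

definition even_pos_smooth :: "('a::euclidean_space \<Rightarrow> real) \<Rightarrow> bool" where
  "even_pos_smooth f \<longleftrightarrow> smooth_sphere f \<and> (\<forall>s\<in>Sph. 0 < f s \<and> f s = f (- s))"

end

theory Submission
  imports Defs
begin

text \<open>Apply the Poincare inequality to g = sqrt f, which is again even, positive and smooth.
  Since |\<nabla>g|^2 = |\<nabla>f|^2 / (4 f), this bounds the double integral of (g(\<sigma>') - g(\<sigma>))^2 b by
  C_P/4 times the Fisher information I(f) = \<integral> |\<nabla>f|^2 / f. The elementary bound
  (a - c)^2 / (a + c) \<le> 2 (sqrt a - sqrt c)^2 turns this into the bound C_P/2 \<cdot> I(f) for the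
  double integral on the right-hand side, and the curvature hypothesis bounds c_K \<cdot> I(f) by the
  \<Gamma>-2 integral.\<close>

definition differentiable_with_partials_in ::
    "'a::euclidean_space set \<Rightarrow> ('a \<Rightarrow> real) set \<Rightarrow> ('a \<Rightarrow> real) \<Rightarrow> bool" where
  "differentiable_with_partials_in U A G \<longleftrightarrow>
     (\<forall>x\<in>U. G differentiable (at x)) \<and> continuous_on U G \<and>
     (\<forall>v\<in>Basis. \<exists>G'\<in>A. \<forall>x\<in>U. frechet_derivative G (at x) v = G' x)"

lemma differentiable_with_partials_in_const:
  assumes "(\<lambda>x. 0) \<in> A"
  shows "differentiable_with_partials_in U A (\<lambda>x. c)"
  using assms unfolding differentiable_with_partials_in_def by auto

lemma differentiable_with_partials_in_add:
  assumes G: "differentiable_with_partials_in U A G" and H: "differentiable_with_partials_in U A H"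
    and add_closed: "\<And>G H. G \<in> A \<Longrightarrow> H \<in> A \<Longrightarrow> (\<lambda>x. G x + H x) \<in> A"
  shows "differentiable_with_partials_in U A (\<lambda>x. G x + H x)"
  unfolding differentiable_with_partials_in_def
proof (intro conjI ballI)
  show "continuous_on U (\<lambda>x. G x + H x)"
    using G H unfolding differentiable_with_partials_in_def by (intro continuous_intros) auto
next
  fix x assume "x \<in> U"
  then show "(\<lambda>x. G x + H x) differentiable at x"
    using G H unfolding differentiable_with_partials_in_def by auto
next
  fix v :: 'a assume v: "v \<in> Basis"
  obtain G' H' where G': "G' \<in> A" "\<forall>x\<in>U. frechet_derivative G (at x) v = G' x"
    and H': "H' \<in> A" "\<forall>x\<in>U. frechet_derivative H (at x) v = H' x"
    using G H v unfolding differentiable_with_partials_in_def by meson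
  show "\<exists>K\<in>A. \<forall>x\<in>U. frechet_derivative (\<lambda>x. G x + H x) (at x) v = K x"
  proof (intro bexI ballI)
    fix x assume x: "x \<in> U"
    have "((\<lambda>x. G x + H x) has_derivative
        (\<lambda>h. frechet_derivative G (at x) h + frechet_derivative H (at x) h)) (at x)"
      using G H x unfolding differentiable_with_partials_in_def
      by (intro has_derivative_add) (auto simp: frechet_derivative_works[symmetric])
    then show "frechet_derivative (\<lambda>x. G x + H x) (at x) v = G' x + H' x"
      using G'(2) H'(2) x by (simp add: frechet_derivative_at[symmetric])
  qed (rule add_closed[OF G'(1) H'(1)])
qed

lemma differentiable_with_partials_in_mult:
  assumes G: "differentiable_with_partials_in U A G" and H: "differentiable_with_partials_in U A H"
    and "G \<in> A" "H \<in> A"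
    and add_closed: "\<And>G H. G \<in> A \<Longrightarrow> H \<in> A \<Longrightarrow> (\<lambda>x. G x + H x) \<in> A"
    and mult_closed: "\<And>G H. G \<in> A \<Longrightarrow> H \<in> A \<Longrightarrow> (\<lambda>x. G x * H x) \<in> A"
  shows "differentiable_with_partials_in U A (\<lambda>x. G x * H x)"
  unfolding differentiable_with_partials_in_def
proof (intro conjI ballI)
  show "continuous_on U (\<lambda>x. G x * H x)"
    using G H unfolding differentiable_with_partials_in_def by (intro continuous_intros) auto
next
  fix x assume "x \<in> U"
  then show "(\<lambda>x. G x * H x) differentiable at x"
    using G H unfolding differentiable_with_partials_in_def by auto
next
  fix v :: 'a assume v: "v \<in> Basis"
  obtain G' H' where G': "G' \<in> A" "\<forall>x\<in>U. frechet_derivative G (at x) v = G' x"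
    and H': "H' \<in> A" "\<forall>x\<in>U. frechet_derivative H (at x) v = H' x"
    using G H v unfolding differentiable_with_partials_in_def by meson
  show "\<exists>K\<in>A. \<forall>x\<in>U. frechet_derivative (\<lambda>x. G x * H x) (at x) v = K x"
  proof (intro bexI ballI)
    fix x assume x: "x \<in> U"
    have "((\<lambda>x. G x * H x) has_derivative
        (\<lambda>h. G x * frechet_derivative H (at x) h + frechet_derivative G (at x) h * H x)) (at x)"
      using G H x unfolding differentiable_with_partials_in_def
      by (intro has_derivative_mult) (auto simp: frechet_derivative_works[symmetric])
    then show "frechet_derivative (\<lambda>x. G x * H x) (at x) v = G x * H' x + G' x * H x"
      using G'(2) H'(2) x by (simp add: frechet_derivative_at[symmetric])
  qed (intro add_closed mult_closed G'(1) H'(1) \<open>G \<in> A\<close> \<open>H \<in> A\<close>)+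
qed

lemma smooth_on_differentiable_on: "smooth_on U F \<Longrightarrow> F differentiable_on U"
  and smooth_on_continuous_on: "smooth_on U F \<Longrightarrow> continuous_on U F"
  unfolding smooth_on_def by (metis dirderiv.simps(1) empty_set empty_subsetI)+

text \<open>For positive smooth F this algebra is closed under partial derivatives; hence all iterated
  partial derivatives of F powr r are continuous.\<close>
inductive_set powr_algebra :: "('a::euclidean_space \<Rightarrow> real) \<Rightarrow> ('a \<Rightarrow> real) set" for F where
  dirderiv: "set vs \<subseteq> Basis \<Longrightarrow> dirderiv vs F \<in> powr_algebra F"
| powr: "(\<lambda>x. F x powr r) \<in> powr_algebra F"
| const: "(\<lambda>x. c) \<in> powr_algebra F"
| add: "G \<in> powr_algebra F \<Longrightarrow> H \<in> powr_algebra F \<Longrightarrow> (\<lambda>x. G x + H x) \<in> powr_algebra F"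
| mult: "G \<in> powr_algebra F \<Longrightarrow> H \<in> powr_algebra F \<Longrightarrow> (\<lambda>x. G x * H x) \<in> powr_algebra F"

lemma differentiable_with_partials_in_dirderiv:
  assumes "smooth_on U F" "open U" "set vs \<subseteq> Basis"
  shows "differentiable_with_partials_in U (powr_algebra F) (dirderiv vs F)"
  unfolding differentiable_with_partials_in_def
proof (intro conjI ballI)
  show "continuous_on U (dirderiv vs F)" and "\<And>x. x \<in> U \<Longrightarrow> dirderiv vs F differentiable at x"
    using assms differentiable_on_eq_differentiable_at unfolding smooth_on_def by blast+
  show "\<exists>G'\<in>powr_algebra F. \<forall>x\<in>U. frechet_derivative (dirderiv vs F) (at x) v = G' x"
    if "v \<in> Basis" for v
    using that assms(3) powr_algebra.dirderiv[of "v # vs" F] by fastforce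
qed

lemma differentiable_with_partials_in_powr:
  assumes F: "smooth_on U F" and U: "open U" and pos: "\<And>x. x \<in> U \<Longrightarrow> F x > 0"
  shows "differentiable_with_partials_in U (powr_algebra F) (\<lambda>x. F x powr r)"
  unfolding differentiable_with_partials_in_def
proof (intro conjI ballI)
  have F_diff: "F differentiable (at x)" if "x \<in> U" for x
    using smooth_on_differentiable_on[OF F] U that differentiable_on_eq_differentiable_at by blast
  have D: "((\<lambda>x. F x powr r) has_derivative
      (\<lambda>h. frechet_derivative F (at x) h * (r * F x powr (r - 1)))) (at x)" if "x \<in> U" for x
    using DERIV_compose_FDERIV[OF has_real_derivative_powr[OF pos[OF that]]
        F_diff[OF that, unfolded frechet_derivative_works]] .
  show "(\<lambda>x. F x powr r) differentiable at x" if "x \<in> U" for x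
    using D[OF that] differentiable_def by blast
  show "continuous_on U (\<lambda>x. F x powr r)"
    using smooth_on_continuous_on[OF F] pos
    by (intro continuous_on_powr continuous_on_const) force+
  fix v :: 'a assume v: "v \<in> Basis"
  show "\<exists>G'\<in>powr_algebra F. \<forall>x\<in>U. frechet_derivative (\<lambda>x. F x powr r) (at x) v = G' x"
  proof (intro bexI ballI)
    fix x assume "x \<in> U"
    then show "frechet_derivative (\<lambda>x. F x powr r) (at x) v = r * (F x powr (r - 1) * dirderiv [v] F x)"
      using frechet_derivative_at[OF D[OF \<open>x \<in> U\<close>], symmetric] by (simp add: mult_ac)
  next
    show "(\<lambda>x. r * (F x powr (r - 1) * dirderiv [v] F x)) \<in> powr_algebra F"
      using v by (intro powr_algebra.intros) auto
  qed
qed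

lemma powr_algebra_differentiable_with_partials:
  assumes "smooth_on U F" "open U" "\<And>x. x \<in> U \<Longrightarrow> F x > 0" "G \<in> powr_algebra F"
  shows "differentiable_with_partials_in U (powr_algebra F) G"
  using assms(4)
proof (induction rule: powr_algebra.induct)
  case (dirderiv vs)
  then show ?case using differentiable_with_partials_in_dirderiv assms(1,2) by blast
next
  case (powr r)
  then show ?case using differentiable_with_partials_in_powr assms(1-3) by blast
next
  case (const c)
  then show ?case by (intro differentiable_with_partials_in_const powr_algebra.const)
next
  case (add G H)
  then show ?case by (intro differentiable_with_partials_in_add powr_algebra.add)
next
  case (mult G H)
  then show ?case by (intro differentiable_with_partials_in_mult powr_algebra.add powr_algebra.mult)
qed

lemma frechet_derivative_cong_open:
  assumes "open U" "\<And>y. y \<in> U \<Longrightarrow> F y = G y" "x \<in> U"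
  shows "frechet_derivative F (at x) = frechet_derivative G (at x)"
proof -
  have "(\<lambda>D. (F has_derivative D) (at x)) = (\<lambda>D. (G has_derivative D) (at x))"
    using assms by (intro ext iffI) (auto intro: has_derivative_transform_within_open)
  then show ?thesis unfolding frechet_derivative_def by simp
qed

lemma dirderiv_cong_open:
  assumes "open U" "\<And>y. y \<in> U \<Longrightarrow> F y = G y" "x \<in> U"
  shows "dirderiv vs F x = dirderiv vs G x"
  using assms(3)
proof (induction vs arbitrary: x)
  case (Cons v vs)
  have "frechet_derivative (dirderiv vs F) (at x) = frechet_derivative (dirderiv vs G) (at x)"
    using assms(1) Cons.IH Cons.prems by (rule frechet_derivative_cong_open)
  then show ?case by simp
qed (use assms(2) in simp)

lemma differentiable_continuous_on_cong:
  assumes FG: "\<And>x. x \<in> U \<Longrightarrow> F x = G x"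
    and diff: "F differentiable_on U" and cont: "continuous_on U F"
  shows "G differentiable_on U" "continuous_on U G"
proof -
  show "continuous_on U G"
    by (rule continuous_on_cong[THEN iffD1, OF refl FG cont])
  show "G differentiable_on U"
    unfolding differentiable_on_def
  proof
    fix x assume x: "x \<in> U"
    have "F differentiable at x within U"
      using diff x unfolding differentiable_on_def by blast
    then show "G differentiable at x within U"
      by (rule differentiable_transform_within[where d = 1, OF _ zero_less_one x FG])
  qed
qed

lemma smooth_on_cong:
  assumes U: "open U" and FG: "\<And>x. x \<in> U \<Longrightarrow> F x = G x" and F: "smooth_on U F"
  shows "smooth_on U G"
  unfolding smooth_on_def
proof (intro allI impI)
  fix vs :: "'a list" assume "set vs \<subseteq> Basis"
  then have "dirderiv vs F differentiable_on U" "continuous_on U (dirderiv vs F)"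
    using F unfolding smooth_on_def by blast+
  moreover have "dirderiv vs F x = dirderiv vs G x" if "x \<in> U" for x
    using U FG that by (rule dirderiv_cong_open)
  ultimately show "dirderiv vs G differentiable_on U \<and> continuous_on U (dirderiv vs G)"
    by (blast intro: differentiable_continuous_on_cong)
qed

lemma smooth_on_powr:
  assumes F: "smooth_on U F" and U: "open U" and pos: "\<And>x. x \<in> U \<Longrightarrow> F x > 0"
  shows "smooth_on U (\<lambda>x. F x powr r)"
proof -
  have dirderiv_in: "\<exists>G\<in>powr_algebra F. \<forall>x\<in>U. dirderiv vs (\<lambda>x. F x powr r) x = G x"
    if "set vs \<subseteq> Basis" for vs
    using that
  proof (induction vs)
    case Nil
    then show ?case by (auto intro: powr_algebra.powr)
  next
    case (Cons v vs)
    then obtain G where G: "G \<in> powr_algebra F" "\<forall>x\<in>U. dirderiv vs (\<lambda>x. F x powr r) x = G x"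
      by auto
    obtain G' where G': "G' \<in> powr_algebra F" "\<forall>x\<in>U. frechet_derivative G (at x) v = G' x"
      using powr_algebra_differentiable_with_partials[OF F U pos G(1)] Cons.prems
      unfolding differentiable_with_partials_in_def by auto
    have "dirderiv (v # vs) (\<lambda>x. F x powr r) x = G' x" if "x \<in> U" for x
      using frechet_derivative_cong_open[OF U _ that, of "dirderiv vs (\<lambda>x. F x powr r)" G] G(2) G'(2) that
      by simp
    then show ?case using G'(1) by blast
  qed
  show ?thesis
    unfolding smooth_on_def
  proof (intro allI impI)
    fix vs :: "'a list" assume "set vs \<subseteq> Basis"
    then obtain G where G: "G \<in> powr_algebra F" "\<forall>x\<in>U. dirderiv vs (\<lambda>x. F x powr r) x = G x"
      using dirderiv_in by blast
    have "G differentiable_on U" "continuous_on U G"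
      using powr_algebra_differentiable_with_partials[OF F U pos G(1)] U
      unfolding differentiable_with_partials_in_def by (auto simp: differentiable_on_eq_differentiable_at)
    moreover have "G x = dirderiv vs (\<lambda>x. F x powr r) x" if "x \<in> U" for x
      using G(2) that by simp
    ultimately show "dirderiv vs (\<lambda>x. F x powr r) differentiable_on U \<and>
        continuous_on U (dirderiv vs (\<lambda>x. F x powr r))"
      by (blast intro: differentiable_continuous_on_cong)
  qed
qed

lemma even_pos_smooth_sqrt:
  assumes f: "even_pos_smooth f"
  shows "even_pos_smooth (\<lambda>x. sqrt (f x))"
proof -
  have pos: "0 < f s" and even: "f s = f (- s)" if "s \<in> Sph" for s
    using f that unfolding even_pos_smooth_def by blast+
  have open_punctured: "open (- {0::'a})" by auto
  have hext_pos: "0 < hext f x" if "x \<in> - {0}" for x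
    using that pos unfolding hext_def by simp
  have "smooth_on (- {0}) (hext f)"
    using f unfolding even_pos_smooth_def smooth_sphere_def by blast
  then have powr_smooth: "smooth_on (- {0}) (\<lambda>x. hext f x powr (1/2))"
    using open_punctured hext_pos by (rule smooth_on_powr)
  have powr_eq: "hext f x powr (1/2) = hext (\<lambda>x. sqrt (f x)) x" if "x \<in> - {0}" for x
    unfolding hext_def using hext_pos[OF that, unfolded hext_def] by (intro powr_half_sqrt less_imp_le)
  have "smooth_on (- {0}) (hext (\<lambda>x. sqrt (f x)))"
    using open_punctured powr_eq powr_smooth by (rule smooth_on_cong)
  moreover have "0 < sqrt (f s) \<and> sqrt (f s) = sqrt (f (- s))" if "s \<in> Sph" for s
    using pos[OF that] even[OF that] by simp
  ultimately show ?thesis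
    unfolding even_pos_smooth_def smooth_sphere_def by blast
qed

lemma sgrad_sqrt:
  fixes f :: "'a::euclidean_space \<Rightarrow> real"
  assumes f: "smooth_sphere f" and s: "s \<in> Sph" and pos: "0 < f s"
  shows "sgrad (\<lambda>x. sqrt (f x)) s = (inverse (sqrt (f s)) / 2) *\<^sub>R sgrad f s"
proof -
  have hext_sqrt: "hext (\<lambda>x. sqrt (f x)) = (\<lambda>x. sqrt (hext f x))"
    by (simp add: hext_def fun_eq_iff)
  have hext_s: "hext f s = f s"
    using s by (simp add: hext_def)
  have "hext f differentiable at s"
    using smooth_on_differentiable_on[OF f[unfolded smooth_sphere_def]] s
    by (auto simp: differentiable_on_eq_differentiable_at[OF open_Compl])
  then have D: "((\<lambda>x. sqrt (hext f x)) has_derivative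
      (\<lambda>h. frechet_derivative (hext f) (at s) h * (inverse (sqrt (hext f s)) / 2))) (at s)"
    using pos hext_s by (intro DERIV_compose_FDERIV[OF DERIV_real_sqrt])
      (auto simp: frechet_derivative_works[symmetric])
  show ?thesis
    unfolding sgrad_def grad_def hext_sqrt frechet_derivative_at[OF D, symmetric] hext_s
    by (simp add: scaleR_sum_right mult_ac)
qed

lemma norm_sgrad_sqrt_power2:
  fixes f :: "'a::euclidean_space \<Rightarrow> real"
  assumes "smooth_sphere f" "s \<in> Sph" "0 < f s"
  shows "(norm (sgrad (\<lambda>x. sqrt (f x)) s))\<^sup>2 = (norm (sgrad f s))\<^sup>2 / (4 * f s)"
  using assms(3) by (simp add: sgrad_sqrt[OF assms] power_mult_distrib power_divide power_inverse
      inverse_eq_divide)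

lemma integral_lborel_cong_except_point:
  fixes f g :: "'a::euclidean_space \<Rightarrow> real"
  assumes "\<And>x. x \<noteq> c \<Longrightarrow> f x = g x"
  shows "integral\<^sup>L lborel f = integral\<^sup>L lborel g"
proof -
  have f_eq: "f = (\<lambda>x. if x \<in> {c} then f c else g x)"
    and g_eq: "g = (\<lambda>x. if x \<in> {c} then g c else f x)"
    using assms by auto
  have if_measurable: "(\<lambda>x. if x \<in> {c} then a else h x) \<in> borel_measurable borel"
    if "h \<in> borel_measurable borel" for a and h :: "'a \<Rightarrow> real"
    using that by (intro measurable_If_set) auto
  have measurable_iff: "f \<in> borel_measurable borel \<longleftrightarrow> g \<in> borel_measurable borel"
    using if_measurable[of f "g c"] if_measurable[of g "f c"]
    unfolding f_eq[symmetric] g_eq[symmetric] by blast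
  show ?thesis
  proof (cases "f \<in> borel_measurable borel")
    case True
    then show ?thesis using measurable_iff assms
      by (intro integral_cong_AE) (auto intro: AE_mp[OF AE_lborel_singleton[of c]])
  next
    case False
    then show ?thesis using measurable_iff
      by (metis borel_measurable_integrable measurable_lborel2 not_integrable_integral_eq)
  qed
qed

lemma sph_int_cong:
  assumes "\<And>s. s \<in> (Sph :: 'a::euclidean_space set) \<Longrightarrow> g s = h s"
  shows "sph_int g = sph_int h"
proof -
  have "indicator (ball 0 1) x *\<^sub>R g (x /\<^sub>R norm x) = indicator (ball 0 1) x *\<^sub>R h (x /\<^sub>R norm x)"
    if "x \<noteq> (0 :: 'a)" for x
    using assms that by simp
  then show ?thesis
    unfolding sph_int_def set_lebesgue_integral_def
    by (subst integral_lborel_cong_except_point) auto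
qed

lemma sph_int_cmult: "sph_int (\<lambda>s. c * g s) = c * sph_int (g :: 'a::euclidean_space \<Rightarrow> real)"
  unfolding sph_int_def set_lebesgue_integral_def by (simp add: mult.left_commute)

text \<open>The two-sided bounds make p and h integrable together, so the conclusion also holds when
  both Bochner integrals take the junk value 0.\<close>
lemma integral_comparable:
  fixes p h :: "'b \<Rightarrow> real"
  assumes h: "h \<in> borel_measurable M" and p: "p \<in> borel_measurable M"
    and bounds: "AE x in M. 0 \<le> p x \<and> p x \<le> h x \<and> h x \<le> c * p x"
  shows "0 \<le> integral\<^sup>L M p \<and> integral\<^sup>L M p \<le> integral\<^sup>L M h \<and> integral\<^sup>L M h \<le> c * integral\<^sup>L M p"
proof (cases "integrable M p")
  case True
  have "integrable M h"
    by (rule Bochner_Integration.integrable_bound[of M "\<lambda>x. c * p x"]) (use True h bounds in auto)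
  then have "integral\<^sup>L M p \<le> integral\<^sup>L M h" "integral\<^sup>L M h \<le> integral\<^sup>L M (\<lambda>x. c * p x)"
    using True bounds by (intro integral_mono_AE; auto)+
  moreover have "0 \<le> integral\<^sup>L M p"
    using bounds by (auto intro: integral_nonneg_AE)
  ultimately show ?thesis by simp
next
  case False
  have "\<not> integrable M h"
  proof
    assume "integrable M h"
    then have "integrable M p"
      by (rule Bochner_Integration.integrable_bound[OF _ p]) (use bounds in auto)
    then show False using False by blast
  qed
  then show ?thesis using False by (simp add: not_integrable_integral_eq)
qed

lemma sph_int_comparable:
  fixes h p :: "'a::euclidean_space \<Rightarrow> real"
  assumes h: "(\<lambda>x. h (x /\<^sub>R norm x)) \<in> borel_measurable borel"
    and p: "(\<lambda>x. p (x /\<^sub>R norm x)) \<in> borel_measurable borel"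
    and bounds: "\<And>s. s \<in> Sph \<Longrightarrow> 0 \<le> p s \<and> p s \<le> h s \<and> h s \<le> c * p s"
  shows "0 \<le> sph_int p \<and> sph_int p \<le> sph_int h \<and> sph_int h \<le> c * sph_int p"
proof -
  let ?P = "\<lambda>x. indicator (ball 0 1) x *\<^sub>R p (x /\<^sub>R norm x)"
  let ?H = "\<lambda>x. indicator (ball 0 1) x *\<^sub>R h (x /\<^sub>R norm x)"
  have "AE x in lborel. 0 \<le> ?P x \<and> ?P x \<le> ?H x \<and> ?H x \<le> c * ?P x"
    using AE_lborel_singleton[of 0]
  proof (rule AE_mp, intro AE_I2 impI)
    fix x :: 'a assume "x \<noteq> 0"
    then show "0 \<le> ?P x \<and> ?P x \<le> ?H x \<and> ?H x \<le> c * ?P x"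
      using bounds[of "x /\<^sub>R norm x"] by (auto simp: indicator_def)
  qed
  moreover have "?P \<in> borel_measurable lborel" "?H \<in> borel_measurable lborel"
    using h p by (auto intro!: borel_measurable_times borel_measurable_indicator)
  ultimately have "0 \<le> integral\<^sup>L lborel ?P \<and> integral\<^sup>L lborel ?P \<le> integral\<^sup>L lborel ?H
      \<and> integral\<^sup>L lborel ?H \<le> c * integral\<^sup>L lborel ?P"
    by (intro integral_comparable) auto
  then show ?thesis
    unfolding sph_int_def set_lebesgue_integral_def by (auto intro: mult_left_mono)
qed

lemma borel_measurable_sph_int:
  fixes F :: "'a::euclidean_space \<Rightarrow> 'a \<Rightarrow> real"
  assumes F: "(\<lambda>(x, y). F (x /\<^sub>R norm x) (y /\<^sub>R norm y)) \<in> borel_measurable (borel \<Otimes>\<^sub>M borel)"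
  shows "(\<lambda>x. sph_int (F (x /\<^sub>R norm x))) \<in> borel_measurable borel"
proof -
  have "sets (borel \<Otimes>\<^sub>M lborel) = sets (borel \<Otimes>\<^sub>M (borel :: 'a measure))"
    by (rule sets_pair_measure_cong) simp_all
  moreover have "(\<lambda>(x, y). indicator (ball 0 1) y *\<^sub>R F (x /\<^sub>R norm x) (y /\<^sub>R norm y))
      \<in> borel_measurable (borel \<Otimes>\<^sub>M (borel :: 'a measure))"
    using F unfolding case_prod_beta
    by (intro borel_measurable_scaleR borel_measurable_indicator measurable_snd'') auto
  ultimately have "(\<lambda>(x, y). indicator (ball 0 1) y *\<^sub>R F (x /\<^sub>R norm x) (y /\<^sub>R norm y))
      \<in> borel_measurable (borel \<Otimes>\<^sub>M lborel)"
    using measurable_cong_sets by blast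
  then have "(\<lambda>x. LINT y|lborel. indicator (ball 0 1) y *\<^sub>R F (x /\<^sub>R norm x) (y /\<^sub>R norm y))
      \<in> borel_measurable borel"
    by (rule lborel.borel_measurable_lebesgue_integral)
  then show ?thesis
    unfolding sph_int_def set_lebesgue_integral_def by measurable
qed

lemma smooth_sphere_borel_measurable:
  assumes "smooth_sphere f"
  shows "(\<lambda>x. f (x /\<^sub>R norm x)) \<in> borel_measurable borel"
  using borel_measurable_continuous_countable_exceptions[of "{0}" "hext f"]
    smooth_on_continuous_on[OF assms[unfolded smooth_sphere_def]]
  unfolding hext_def by auto

lemma sph_int_norm_sgrad_sqrt:
  assumes f: "even_pos_smooth f"
  shows "sph_int (\<lambda>s. (norm (sgrad (\<lambda>x. sqrt (f x)) s))\<^sup>2)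
    = sph_int (\<lambda>s. (norm (sgrad f s))\<^sup>2 / f s) / 4"
proof -
  have smooth: "smooth_sphere f" and pos: "\<And>s. s \<in> Sph \<Longrightarrow> 0 < f s"
    using f unfolding even_pos_smooth_def by blast+
  have "(norm (sgrad (\<lambda>x. sqrt (f x)) s))\<^sup>2 = 1/4 * ((norm (sgrad f s))\<^sup>2 / f s)"
    if "s \<in> Sph" for s
    using norm_sgrad_sqrt_power2[OF smooth that pos[OF that]] by simp
  then have "sph_int (\<lambda>s. (norm (sgrad (\<lambda>x. sqrt (f x)) s))\<^sup>2)
      = sph_int (\<lambda>s. 1/4 * ((norm (sgrad f s))\<^sup>2 / f s))"
    by (rule sph_int_cong)
  then show ?thesis
    unfolding sph_int_cmult by simp
qed

lemma sqrt_diff_power2_bounds: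
  fixes a c :: real
  assumes "0 < a" "0 < c"
  shows "(sqrt a - sqrt c)\<^sup>2 \<le> (a - c)\<^sup>2 / (a + c)" "(a - c)\<^sup>2 / (a + c) \<le> 2 * (sqrt a - sqrt c)\<^sup>2"
proof -
  define u v where "u = sqrt a" and "v = sqrt c"
  have u: "0 < u" "a = u\<^sup>2" and v: "0 < v" "c = v\<^sup>2"
    using assms unfolding u_def v_def by auto
  have sum_pos: "0 < a + c" using assms by simp
  have diff: "(a - c)\<^sup>2 = (u - v)\<^sup>2 * (u + v)\<^sup>2"
    unfolding u v by (simp add: power2_eq_square algebra_simps)
  have sq_nonneg: "0 \<le> (u - v)\<^sup>2" by simp
  have lower: "a + c \<le> (u + v)\<^sup>2"
    using u v by (simp add: power2_eq_square algebra_simps)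
  have upper: "(u + v)\<^sup>2 \<le> 2 * (a + c)"
    using u v sum_squares_ge_zero[of "u - v" 0] by (simp add: power2_eq_square algebra_simps)
  show "(sqrt a - sqrt c)\<^sup>2 \<le> (a - c)\<^sup>2 / (a + c)"
    unfolding pos_le_divide_eq[OF sum_pos] diff u_def[symmetric] v_def[symmetric]
    using mult_left_mono[OF lower sq_nonneg] by simp
  show "(a - c)\<^sup>2 / (a + c) \<le> 2 * (sqrt a - sqrt c)\<^sup>2"
    unfolding pos_divide_le_eq[OF sum_pos] diff u_def[symmetric] v_def[symmetric]
    using mult_left_mono[OF upper sq_nonneg] by (simp add: algebra_simps)
qed

lemma sph_int_sq_diff_div_sum_le:
  fixes f :: "'a::euclidean_space \<Rightarrow> real" and b :: "real \<Rightarrow> real"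
  assumes f[measurable]: "(\<lambda>x. f (x /\<^sub>R norm x)) \<in> borel_measurable borel"
    and pos: "\<And>s. s \<in> Sph \<Longrightarrow> 0 < f s"
    and b[measurable]: "b \<in> borel_measurable borel"
    and b_nonneg: "\<And>t. t \<in> {-1..1} \<Longrightarrow> 0 \<le> b t"
  shows "sph_int (\<lambda>s. sph_int (\<lambda>s'. (f s' - f s)\<^sup>2 / (f s' + f s) * b (s' \<bullet> s)))
    \<le> 2 * sph_int (\<lambda>s. sph_int (\<lambda>s'. (sqrt (f s') - sqrt (f s))\<^sup>2 * b (s' \<bullet> s)))"
proof -
  define H where "H s s' = (f s' - f s)\<^sup>2 / (f s' + f s) * b (s' \<bullet> s)" for s s' :: 'a
  define P where "P s s' = (sqrt (f s') - sqrt (f s))\<^sup>2 * b (s' \<bullet> s)" for s s' :: 'a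
  have H_measurable: "(\<lambda>(x, y). H (x /\<^sub>R norm x) (y /\<^sub>R norm y)) \<in> borel_measurable (borel \<Otimes>\<^sub>M borel)"
    and P_measurable: "(\<lambda>(x, y). P (x /\<^sub>R norm x) (y /\<^sub>R norm y)) \<in> borel_measurable (borel \<Otimes>\<^sub>M borel)"
    unfolding H_def P_def by measurable
  have kernel_nonneg: "0 \<le> b (s' \<bullet> s)" if "s \<in> Sph" "s' \<in> Sph" for s s' :: 'a
    using b_nonneg Cauchy_Schwarz_ineq2[of s' s] that by (simp add: abs_le_iff)
  have inner: "0 \<le> sph_int (P s) \<and> sph_int (P s) \<le> sph_int (H s) \<and> sph_int (H s) \<le> 2 * sph_int (P s)"
    if s: "s \<in> Sph" for s
  proof (rule sph_int_comparable)
    show "(\<lambda>x. H s (x /\<^sub>R norm x)) \<in> borel_measurable borel"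
      and "(\<lambda>x. P s (x /\<^sub>R norm x)) \<in> borel_measurable borel"
      unfolding H_def P_def by measurable
    fix s' :: 'a assume s': "s' \<in> Sph"
    show "0 \<le> P s s' \<and> P s s' \<le> H s s' \<and> H s s' \<le> 2 * P s s'"
      using mult_right_mono[OF sqrt_diff_power2_bounds(1)[OF pos[OF s'] pos[OF s]] kernel_nonneg[OF s s']]
        mult_right_mono[OF sqrt_diff_power2_bounds(2)[OF pos[OF s'] pos[OF s]] kernel_nonneg[OF s s']]
        kernel_nonneg[OF s s']
      unfolding H_def P_def by (simp add: mult.assoc)
  qed
  have "0 \<le> sph_int (\<lambda>s. sph_int (P s)) \<and> sph_int (\<lambda>s. sph_int (P s)) \<le> sph_int (\<lambda>s. sph_int (H s))
      \<and> sph_int (\<lambda>s. sph_int (H s)) \<le> 2 * sph_int (\<lambda>s. sph_int (P s))"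
    using borel_measurable_sph_int[OF H_measurable] borel_measurable_sph_int[OF P_measurable] inner
    by (rule sph_int_comparable)
  then show ?thesis
    unfolding H_def P_def by simp
qed

theorem lemma5p3:
  fixes b :: "real \<Rightarrow> real" and cK CP :: real
  assumes kernel: "angular_kernel b TYPE('a::euclidean_space)"
    and cK: "cK > 0" and CP: "CP > 0"
    and curv: "\<And>f :: 'a \<Rightarrow> real. even_pos_smooth f \<Longrightarrow>
        sph_int (\<lambda>s. Gamma2 b (\<lambda>x. ln (f x)) (\<lambda>x. ln (f x)) s * f s)
          \<ge> cK * sph_int (\<lambda>s. (norm (sgrad f s))\<^sup>2 / f s)"
    and poinc: "\<And>f :: 'a \<Rightarrow> real. even_pos_smooth f \<Longrightarrow>
        CP * sph_int (\<lambda>s. (norm (sgrad f s))\<^sup>2)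
          \<ge> sph_int (\<lambda>s. sph_int (\<lambda>s'. (f s' - f s)\<^sup>2 * b (s' \<bullet> s)))"
  shows "\<And>f :: 'a \<Rightarrow> real. even_pos_smooth f \<Longrightarrow>
        sph_int (\<lambda>s. Gamma2 b (\<lambda>x. ln (f x)) (\<lambda>x. ln (f x)) s * f s)
          \<ge> (2 * cK / CP) *
            sph_int (\<lambda>s. sph_int (\<lambda>s'. (f s' - f s)\<^sup>2 / (f s' + f s) * b (s' \<bullet> s)))"
proof -
  fix f :: "'a \<Rightarrow> real"
  assume f: "even_pos_smooth f"
  define Fisher where "Fisher = sph_int (\<lambda>s. (norm (sgrad f s))\<^sup>2 / f s)"
  define Quotient_form where
    "Quotient_form = sph_int (\<lambda>s. sph_int (\<lambda>s'. (f s' - f s)\<^sup>2 / (f s' + f s) * b (s' \<bullet> s)))"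
  have "Quotient_form \<le> 2 * sph_int (\<lambda>s. sph_int (\<lambda>s'. (sqrt (f s') - sqrt (f s))\<^sup>2 * b (s' \<bullet> s)))"
    unfolding Quotient_form_def
    using f kernel unfolding even_pos_smooth_def angular_kernel_def
    by (intro sph_int_sq_diff_div_sum_le smooth_sphere_borel_measurable) blast+
  also have "\<dots> \<le> 2 * (CP * (Fisher / 4))"
    using poinc[OF even_pos_smooth_sqrt[OF f]] unfolding sph_int_norm_sgrad_sqrt[OF f] Fisher_def
    by simp
  finally have "(2 * cK / CP) * Quotient_form \<le> cK * Fisher"
    using cK CP by (simp add: field_simps)
  also have "\<dots> \<le> sph_int (\<lambda>s. Gamma2 b (\<lambda>x. ln (f x)) (\<lambda>x. ln (f x)) s * f s)"
    using curv[OF f] unfolding Fisher_def .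
  finally show "sph_int (\<lambda>s. Gamma2 b (\<lambda>x. ln (f x)) (\<lambda>x. ln (f x)) s * f s)
      \<ge> (2 * cK / CP) * Quotient_form" .
qed

end
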